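(* Let $\mu\in\mathcal P_\varnothing(nl)$, let $R$ be an $l$-rim-hook in $\mu$, and set $\mu'=\mu-R\in\mathcal P_\varnothing((n-1)l)$. Then $\underline{\mathsf{Eig}}(\mu')$ is obtained from $\underline{\mathsf{Eig}}(\mu)$ by removing a single cell, i.e. $\underline{\mathsf{Eig}}(\mu')=\underline{\mathsf{Eig}}(\mu)-\blacksquare$ for some $\blacksquare\in\underline{\mathsf{Eig}}(\mu)$.
   Context: An $l$-rim-hook of $\mu$ is a set of $l$ cells of the rim of the Young diagram (cells $(i,j)$ with $(i+1,j+1)\notin\mu$) obtained as the intersection of the rim with $\{(i',j'):i'\ge i,\ j'\ge j\}$ for some cell $(i,j)$; removing it leaves a partition. Let $\mathbf h=(h,H_1,\dots,H_{l-1})\in\mathbb{Q}^l$ be generic, $H_0=-\sum_{i\ge1}H_i$, and $\theta=(-h+H_0,H_1,\dots,H_{l-1})$ (indices mod $l$). Let $e_0=0$ and $e_i=H_1+\dots+H_i$. For a partition $\lambda$, $t^e\mathrm{Res}_\lambda(t^h)=\sum_{\square\in\lambda}t^{e+h(j-i)}$ for $\square=(i,j)$. For $\mu$ with Frobenius form $(a_1..a_k\mid b_1..b_k)$ ($a_i=\mu_i-i$, $b_i=\mu^t_i-i$), put $r_i=b_i+1$ and $m_i=a_i+b_i+1$. Define $\alpha^{(i)}_j=\sum_{s=1}^j\theta_{r_i-s}$ for $1\le j<r_i$, $\alpha^{(i)}_j=-\sum_{s=0}^{m_i-j-1}\theta_{-m_i+r_i+s}$ for $r_i\le j\le m_i-1$,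 and $\alpha^{(i)}_{m_i}=0$. Let $\mathrm{Eig}(\mu)=\sum_{i}\sum_{1\le j\le m_i,\ j\equiv r_i-1\ (l)}t^{\alpha^{(i)}_j}$. $\underline{\mathsf{Eig}}(\mu)$ is the unique $l$-multipartition $(\lambda^0,\dots,\lambda^{l-1})$ with $\sum_j t^{e_j}\mathrm{Res}_{\lambda^j}(t^h)=\mathrm{Eig}(\mu)$; the paper shows this exists and is unique for generic $\mathbf h$, for every partition with empty $l$-core. Removing a cell from a multipartition means removing it from one of its components. *)

theory Defs
  imports Complex_Main "HOL-Library.Multiset"
begin

type_synonym cell = "nat \<times> nat"

text \<open>Young diagrams: finite sets of cells (i,j) with i,j \<ge> 1 (row i, column j),
closed under moving up/left.\<close>
definition is_partition :: "cell set \<Rightarrow> bool" where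
  "is_partition mu \<longleftrightarrow> finite mu \<and> (\<forall>(i,j)\<in>mu. 1 \<le> i \<and> 1 \<le> j) \<and>
     (\<forall>(i,j)\<in>mu. \<forall>i' j'. 1 \<le> i' \<and> i' \<le> i \<and> 1 \<le> j' \<and> j' \<le> j \<longrightarrow> (i',j') \<in> mu)"

definition rim :: "cell set \<Rightarrow> cell set" where
  "rim mu = {(i,j). (i,j) \<in> mu \<and> (i+1, j+1) \<notin> mu}"

definition is_rim_hook :: "nat \<Rightarrow> cell set \<Rightarrow> cell set \<Rightarrow> bool" where
  "is_rim_hook l mu R \<longleftrightarrow>
     (\<exists>(i,j)\<in>mu. R = {(i',j'). (i',j') \<in> rim mu \<and> i \<le> i' \<and> j \<le> j'})
     \<and> card R = l \<and> is_partition (mu - R)"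

inductive empty_core :: "nat \<Rightarrow> cell set \<Rightarrow> bool" for l where
  empty: "empty_core l {}"
| step: "is_rim_hook l mu R \<Longrightarrow> empty_core l (mu - R) \<Longrightarrow> empty_core l mu"

text \<open>Parameters: p 0 = h, p i = H_i for 1 \<le> i \<le> l-1.\<close>
definition H0 :: "nat \<Rightarrow> (nat \<Rightarrow> rat) \<Rightarrow> rat" where
  "H0 l p = - (\<Sum>i\<in>{1..<l}. p i)"

definition theta :: "nat \<Rightarrow> (nat \<Rightarrow> rat) \<Rightarrow> int \<Rightarrow> rat" where
  "theta l p k = (let m = nat (k mod int l) in if m = 0 then - p 0 + H0 l p else p m)"

definition eshift :: "(nat \<Rightarrow> rat) \<Rightarrow> nat \<Rightarrow> rat" where
  "eshift p k = (\<Sum>i\<in>{1..k}. p i)"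

text \<open>t^e Res_lambda(t^h) as a multiset of exponents.\<close>
definition res :: "rat \<Rightarrow> rat \<Rightarrow> cell set \<Rightarrow> rat multiset" where
  "res e h lam = image_mset (\<lambda>(i,j). e + h * (of_int (int j - int i))) (mset_set lam)"

definition rowlen :: "cell set \<Rightarrow> nat \<Rightarrow> nat" where
  "rowlen mu i = card {j. (i,j) \<in> mu}"

definition collen :: "cell set \<Rightarrow> nat \<Rightarrow> nat" where
  "collen mu j = card {i. (i,j) \<in> mu}"

definition frob_rank :: "cell set \<Rightarrow> nat" where
  "frob_rank mu = card {i. (i,i) \<in> mu}"

definition frob_a :: "cell set \<Rightarrow> nat \<Rightarrow> int" where
  "frob_a mu i = int (rowlen mu i) - int i"

definition frob_b :: "cell set \<Rightarrow> nat \<Rightarrow> int" where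
  "frob_b mu i = int (collen mu i) - int i"

definition frob_r :: "cell set \<Rightarrow> nat \<Rightarrow> int" where
  "frob_r mu i = frob_b mu i + 1"

definition frob_m :: "cell set \<Rightarrow> nat \<Rightarrow> int" where
  "frob_m mu i = frob_a mu i + frob_b mu i + 1"

definition alpha :: "nat \<Rightarrow> (nat \<Rightarrow> rat) \<Rightarrow> cell set \<Rightarrow> nat \<Rightarrow> int \<Rightarrow> rat" where
  "alpha l p mu i j =
    (let r = frob_r mu i; m = frob_m mu i in
     if 1 \<le> j \<and> j < r then (\<Sum>s\<in>{1..j}. theta l p (r - s))
     else if r \<le> j \<and> j \<le> m - 1 then - (\<Sum>s\<in>{0..m - j - 1}. theta l p (- m + r + s))
     else 0)"

definition Eig :: "nat \<Rightarrow> (nat \<Rightarrow> rat) \<Rightarrow> cell set \<Rightarrow> rat multiset" where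
  "Eig l p mu = (\<Sum>i\<in>{1..frob_rank mu}.
      image_mset (alpha l p mu i)
        (mset_set {j \<in> {1..frob_m mu i}. j mod int l = (frob_r mu i - 1) mod int l}))"

definition is_multipartition :: "nat \<Rightarrow> (nat \<Rightarrow> cell set) \<Rightarrow> bool" where
  "is_multipartition l Lam \<longleftrightarrow> (\<forall>k<l. is_partition (Lam k)) \<and> (\<forall>k\<ge>l. Lam k = {})"

definition EigMP :: "nat \<Rightarrow> (nat \<Rightarrow> rat) \<Rightarrow> cell set \<Rightarrow> (nat \<Rightarrow> cell set)" where
  "EigMP l p mu = (THE Lam. is_multipartition l Lam \<and>
       (\<Sum>k<l. res (eshift p k) (p 0) (Lam k)) = Eig l p mu)"

end

theory Submission
  imports Defs
begin

text \<open>
  Each arm \<open>a\<close> and each leg \<open>b\<close> of the Frobenius form of \<open>mu\<close> contributes a run of boxes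
  \<open>(k, c)\<close> (residue \<open>k\<close>, content \<open>c\<close>), and the eigenvalues of \<open>mu\<close> are the weights
  \<open>e\<^sub>k + h c\<close> of these boxes. An empty \<open>l\<close>-core makes arms and legs equinumerous in every
  residue class, and this is exactly what makes the boxes of residue \<open>k\<close> the diagonals of a
  partition; so the boxes form a multipartition with the prescribed eigenvalues. For generic
  parameters distinct boxes of bounded content have distinct weights, so this multipartition is
  \<open>EigMP l p mu\<close>. Removing an \<open>l\<close>-rim hook lowers the arm and the leg of its corner cell by
  \<open>l\<close>, negative values dropping out; in each case exactly one box disappears, hence exactly
  one cell of the multipartition.
\<close>

section \<open>Young diagrams and Frobenius coordinates\<close>

lemma down_closed_nat_set_eq:
  fixes S :: "nat set"
  assumes "finite S" "\<forall>j\<in>S. 1 \<le> j" "\<forall>j\<in>S. \<forall>j'. 1 \<le> j' \<and> j' \<le> j \<longrightarrow> j' \<in> S"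
  shows "S = {1..card S}"
proof (cases "S = {}")
  case False
  define M where "M = Max S"
  have "M \<in> S" using False assms(1) M_def by simp
  have "S = {1..M}"
  proof
    show "S \<subseteq> {1..M}" using assms(1,2) M_def by auto
    show "{1..M} \<subseteq> S" using assms(3) \<open>M \<in> S\<close> by auto
  qed
  then show ?thesis by simp
qed simp

lemma partition_row:
  assumes "is_partition mu" "1 \<le> i"
  shows "{j. (i, j) \<in> mu} = {1..rowlen mu i}"
proof -
  have "{j. (i, j) \<in> mu} \<subseteq> snd ` mu" by force
  then have "finite {j. (i, j) \<in> mu}"
    using assms(1) unfolding is_partition_def by (meson finite_surj)
  then show ?thesis
    unfolding rowlen_def
    by (rule down_closed_nat_set_eq) (use assms(1) in \<open>fastforce simp: is_partition_def\<close>)+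
qed

lemma partition_mem_iff:
  assumes "is_partition mu"
  shows "(i, j) \<in> mu \<longleftrightarrow> 1 \<le> i \<and> 1 \<le> j \<and> j \<le> rowlen mu i"
proof (cases "1 \<le> i")
  case True
  then show ?thesis using partition_row[OF assms True] by (metis atLeastAtMost_iff mem_Collect_eq)
qed (use assms in \<open>auto simp: is_partition_def\<close>)

lemma rowlen_antimono:
  assumes "is_partition mu" "1 \<le> i" "i \<le> i'"
  shows "rowlen mu i' \<le> rowlen mu i"
proof (cases "rowlen mu i' = 0")
  case False
  then have "(i', rowlen mu i') \<in> mu" using partition_mem_iff[OF assms(1)] assms by auto
  then have "(i, rowlen mu i') \<in> mu"
    using assms False unfolding is_partition_def by fastforce
  then show ?thesis using partition_mem_iff[OF assms(1)] by auto
qed simp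

definition conjugate :: "cell set \<Rightarrow> cell set" where
  "conjugate mu = prod.swap ` mu"

lemma conjugate_iff [simp]: "(i, j) \<in> conjugate mu \<longleftrightarrow> (j, i) \<in> mu"
  unfolding conjugate_def by force

lemma card_conjugate: "card (conjugate mu) = card mu"
  unfolding conjugate_def by (simp add: card_image)

lemma conjugate_Diff: "conjugate (A - B) = conjugate A - conjugate B"
  unfolding conjugate_def by (simp add: image_set_diff)

lemma is_partition_conjugate:
  assumes "is_partition mu"
  shows "is_partition (conjugate mu)"
  using assms unfolding is_partition_def conjugate_def by fastforce

lemma rowlen_conjugate: "rowlen (conjugate mu) = collen mu"
  unfolding rowlen_def collen_def by auto

lemma rim_conjugate: "rim (conjugate mu) = conjugate (rim mu)"
  unfolding rim_def by auto

lemma frob_rank_conjugate: "frob_rank (conjugate mu) = frob_rank mu"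
  unfolding frob_rank_def by auto

lemma frob_b_eq_frob_a_conjugate: "frob_b mu = frob_a (conjugate mu)"
  unfolding frob_b_def frob_a_def rowlen_conjugate by simp

lemma partition_mem_iff_collen:
  assumes "is_partition mu"
  shows "(i, j) \<in> mu \<longleftrightarrow> 1 \<le> i \<and> 1 \<le> j \<and> i \<le> collen mu j"
  using partition_mem_iff[OF is_partition_conjugate[OF assms], of j i]
  by (auto simp: rowlen_conjugate)

lemma partition_diagonal:
  assumes "is_partition mu"
  shows "{i. (i, i) \<in> mu} = {1..frob_rank mu}"
proof -
  have "{i. (i, i) \<in> mu} \<subseteq> fst ` mu" by force
  then have "finite {i. (i, i) \<in> mu}"
    using assms unfolding is_partition_def by (meson finite_surj)
  then show ?thesis
    unfolding frob_rank_def
    by (rule down_closed_nat_set_eq) (use assms in \<open>fastforce simp: is_partition_def\<close>)+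
qed

lemma frob_a_strict_antimono:
  assumes "is_partition mu" "1 \<le> i" "i < i'"
  shows "frob_a mu i' < frob_a mu i"
  using rowlen_antimono[OF assms(1,2), of i'] assms(3) unfolding frob_a_def by linarith

lemma inj_on_frob_a:
  assumes "is_partition mu"
  shows "inj_on (frob_a mu) {1..}"
  by (rule inj_onI) (metis assms atLeast_iff frob_a_strict_antimono less_irrefl nat_neq_iff)

definition arms :: "cell set \<Rightarrow> int set" where
  "arms mu = {v \<in> frob_a mu ` {1..}. 0 \<le> v}"

definition legs :: "cell set \<Rightarrow> int set" where
  "legs mu = arms (conjugate mu)"

lemma arms_nonneg: "a \<in> arms mu \<Longrightarrow> 0 \<le> a"
  unfolding arms_def by auto

lemma legs_nonneg: "b \<in> legs mu \<Longrightarrow> 0 \<le> b"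
  unfolding legs_def by (rule arms_nonneg)

lemma arms_eq_frob_a_image:
  assumes "is_partition mu"
  shows "arms mu = frob_a mu ` {1..frob_rank mu}"
proof -
  have "i \<in> {1..frob_rank mu} \<longleftrightarrow> 0 \<le> frob_a mu i" if "1 \<le> i" for i
    using that partition_diagonal[OF assms] partition_mem_iff[OF assms, of i i]
    unfolding frob_a_def by auto
  then show ?thesis
    unfolding arms_def by (intro set_eqI iffI) force+
qed

lemma legs_eq_frob_b_image:
  assumes "is_partition mu"
  shows "legs mu = frob_b mu ` {1..frob_rank mu}"
  using arms_eq_frob_a_image[OF is_partition_conjugate[OF assms]]
  unfolding legs_def frob_b_eq_frob_a_conjugate frob_rank_conjugate .

lemma finite_arms: "is_partition mu \<Longrightarrow> finite (arms mu)"
  by (simp add: arms_eq_frob_a_image)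

lemma finite_legs: "is_partition mu \<Longrightarrow> finite (legs mu)"
  unfolding legs_def by (simp add: finite_arms is_partition_conjugate)

section \<open>Removing a rim hook\<close>

locale rim_hook_at =
  fixes mu :: "cell set" and l i0 j0 :: nat and R :: "cell set"
  assumes partition: "is_partition mu"
    and corner: "(i0, j0) \<in> mu"
    and hook_eq: "R = {(i, j). (i, j) \<in> rim mu \<and> i0 \<le> i \<and> j0 \<le> j}"
    and card_hook: "card R = l"
    and partition_diff: "is_partition (mu - R)"
begin

lemma corner_bounds: "1 \<le> i0" "1 \<le> j0" "j0 \<le> rowlen mu i0" "i0 \<le> collen mu j0"
  using corner partition_mem_iff[OF partition] partition_mem_iff_collen[OF partition] by auto

lemma le_collen_iff: "1 \<le> i \<Longrightarrow> i \<le> collen mu j0 \<longleftrightarrow> j0 \<le> rowlen mu i"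
  using partition_mem_iff[OF partition] partition_mem_iff_collen[OF partition] corner_bounds
  by blast

lemma hook_rows: "R = Sigma {i0..collen mu j0} (\<lambda>i. {max j0 (rowlen mu (Suc i)) .. rowlen mu i})"
proof (rule set_eqI)
  fix x :: cell
  obtain i j where x: "x = (i, j)" by (cases x)
  have "i0 \<le> i \<Longrightarrow> j0 \<le> j \<Longrightarrow> j \<le> rowlen mu i \<Longrightarrow> i \<le> collen mu j0"
    using le_collen_iff[of i] corner_bounds by linarith
  then show "x \<in> R \<longleftrightarrow> x \<in> Sigma {i0..collen mu j0} (\<lambda>i. {max j0 (rowlen mu (Suc i)) .. rowlen mu i})"
    unfolding hook_eq rim_def x using partition_mem_iff[OF partition] corner_bounds by auto
qed

lemma hook_length: "frob_a mu i0 - int l = int j0 - 1 - int (collen mu j0)"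
proof -
  define g where "g i = int (max j0 (rowlen mu i))" for i
  have row_width: "int (card {max j0 (rowlen mu (Suc i)) .. rowlen mu i}) = g i - g (Suc i) + 1"
    if "i \<in> {i0..collen mu j0}" for i
    using that le_collen_iff[of i] corner_bounds rowlen_antimono[OF partition, of i "Suc i"]
    unfolding g_def by auto
  have "int l = (\<Sum>i = i0..collen mu j0. int (card {max j0 (rowlen mu (Suc i)) .. rowlen mu i}))"
    using card_hook unfolding hook_rows
    by (simp add: card_SigmaI of_nat_sum[symmetric] del: card_atLeastAtMost)
  also have "\<dots> = (\<Sum>i = i0..collen mu j0. g i - g (Suc i) + 1)"
    using row_width by (rule sum.cong[OF refl])
  also have "\<dots> = g i0 - g (Suc (collen mu j0)) + (int (collen mu j0) - int i0 + 1)"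
    using sum_Suc_diff[of i0 "collen mu j0" "\<lambda>i. - g i"] corner_bounds
    by (simp add: sum.distrib sum_negf)
  also have "g i0 = int (rowlen mu i0)"
    using corner_bounds unfolding g_def by simp
  also have "g (Suc (collen mu j0)) = int j0"
    using le_collen_iff[of "Suc (collen mu j0)"] unfolding g_def by simp
  finally show ?thesis unfolding frob_a_def by simp
qed

lemma rowlen_diff_hook:
  "rowlen (mu - R) i =
     (if i0 \<le> i \<and> i \<le> collen mu j0 then max j0 (rowlen mu (Suc i)) - 1 else rowlen mu i)"
proof (cases "i0 \<le> i \<and> i \<le> collen mu j0")
  case True
  then have "j0 \<le> rowlen mu i" "rowlen mu (Suc i) \<le> rowlen mu i"
    using le_collen_iff[of i] corner_bounds rowlen_antimono[OF partition, of i "Suc i"] by auto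
  then have "{j. (i, j) \<in> mu - R} = {1..max j0 (rowlen mu (Suc i)) - 1}"
    using True corner_bounds partition_mem_iff[OF partition] unfolding hook_rows by auto
  then show ?thesis using True unfolding rowlen_def by simp
next
  case False
  then have "{j. (i, j) \<in> mu - R} = {j. (i, j) \<in> mu}" unfolding hook_rows by auto
  then show ?thesis unfolding if_not_P[OF False] rowlen_def by simp
qed

lemma frob_a_diff_hook:
  shows "\<not> (i0 \<le> i \<and> i \<le> collen mu j0) \<Longrightarrow> frob_a (mu - R) i = frob_a mu i"
    and "i0 \<le> i \<Longrightarrow> i < collen mu j0 \<Longrightarrow> frob_a (mu - R) i = frob_a mu (Suc i)"
    and "frob_a (mu - R) (collen mu j0) = frob_a mu i0 - int l"
proof -
  show "\<not> (i0 \<le> i \<and> i \<le> collen mu j0) \<Longrightarrow> frob_a (mu - R) i = frob_a mu i"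
    unfolding frob_a_def rowlen_diff_hook by (simp only: if_False)
  show "i0 \<le> i \<Longrightarrow> i < collen mu j0 \<Longrightarrow> frob_a (mu - R) i = frob_a mu (Suc i)"
    using le_collen_iff[of "Suc i"] corner_bounds unfolding frob_a_def rowlen_diff_hook by auto
  show "frob_a (mu - R) (collen mu j0) = frob_a mu i0 - int l"
    using hook_length le_collen_iff[of "Suc (collen mu j0)"] corner_bounds
    unfolding frob_a_def rowlen_diff_hook by auto
qed

lemma frob_a_ne_hook_end:
  assumes "1 \<le> i"
  shows "frob_a mu i \<noteq> frob_a mu i0 - int l"
proof (cases "i \<le> collen mu j0")
  case True
  then have "j0 \<le> rowlen mu i" using assms le_collen_iff by blast
  then show ?thesis using True unfolding hook_length unfolding frob_a_def by linarith
next
  case False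
  then have "rowlen mu i < j0" using assms le_collen_iff by auto
  then show ?thesis using False unfolding hook_length unfolding frob_a_def by linarith
qed

lemma frob_a_diff_hook_values:
  assumes "1 \<le> i"
  obtains "frob_a (mu - R) i = frob_a mu i0 - int l"
  | i' where "1 \<le> i'" "i' \<noteq> i0" "frob_a (mu - R) i = frob_a mu i'"
proof -
  consider "i = collen mu j0" | "i0 \<le> i" "i < collen mu j0" | "\<not> (i0 \<le> i \<and> i \<le> collen mu j0)"
    by linarith
  then show thesis
  proof cases
    case 2
    then show thesis using that(2)[of "Suc i"] frob_a_diff_hook(2) by simp
  next
    case 3
    then show thesis using that(2)[of i] assms frob_a_diff_hook(1) corner_bounds by auto
  qed (use that(1) frob_a_diff_hook(3) in simp)
qed

lemma frob_a_kept_by_hook: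
  assumes "1 \<le> i" "i \<noteq> i0"
  obtains i' where "1 \<le> i'" "frob_a (mu - R) i' = frob_a mu i"
proof (cases "i0 \<le> i \<and> i \<le> collen mu j0")
  case True
  then show thesis
    using that[of "i - 1"] assms frob_a_diff_hook(2)[of "i - 1"] corner_bounds by auto
next
  case False
  then show thesis using that[of i] assms frob_a_diff_hook(1) by simp
qed

lemma frob_a_diff_hook_image:
  "frob_a (mu - R) ` {1..} = insert (frob_a mu i0 - int l) (frob_a mu ` ({1..} - {i0}))"
proof (intro set_eqI iffI)
  fix v assume "v \<in> frob_a (mu - R) ` {1..}"
  then obtain i where "1 \<le> i" "v = frob_a (mu - R) i" by auto
  then show "v \<in> insert (frob_a mu i0 - int l) (frob_a mu ` ({1..} - {i0}))"
    by (cases rule: frob_a_diff_hook_values) auto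
next
  fix v assume "v \<in> insert (frob_a mu i0 - int l) (frob_a mu ` ({1..} - {i0}))"
  then consider "v = frob_a (mu - R) (collen mu j0)" | i where "1 \<le> i" "i \<noteq> i0" "v = frob_a mu i"
    using frob_a_diff_hook(3) by auto
  then show "v \<in> frob_a (mu - R) ` {1..}"
  proof cases
    case (2 i)
    then show ?thesis by (cases rule: frob_a_kept_by_hook) (metis atLeast_iff rev_image_eqI)
  qed (use corner_bounds in auto)
qed

lemma arms_diff_hook:
  "arms (mu - R) = (arms mu - {frob_a mu i0}) \<union>
     (if 0 \<le> frob_a mu i0 - int l then {frob_a mu i0 - int l} else {})"
proof -
  have "frob_a mu ` ({1..} - {i0}) = frob_a mu ` {1..} - {frob_a mu i0}"
    using inj_on_frob_a[OF partition] corner_bounds by (simp add: inj_on_image_set_diff)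
  then show ?thesis
    unfolding arms_def frob_a_diff_hook_image by auto
qed

lemma hook_end_notin_arms: "frob_a mu i0 - int l \<notin> arms mu"
  unfolding arms_def using frob_a_ne_hook_end by (metis (mono_tags) atLeast_iff imageE mem_Collect_eq)

lemma corner_arm_mem_arms: "0 \<le> frob_a mu i0 \<Longrightarrow> frob_a mu i0 \<in> arms mu"
  unfolding arms_def using corner_bounds by auto

end

lemma rim_hook_at_conjugate:
  assumes "rim_hook_at mu l i0 j0 R"
  shows "rim_hook_at (conjugate mu) l j0 i0 (conjugate R)"
proof -
  interpret rim_hook_at mu l i0 j0 R by (fact assms)
  show ?thesis
  proof
    show "conjugate R = {(i, j). (i, j) \<in> rim (conjugate mu) \<and> j0 \<le> i \<and> i0 \<le> j}"
      unfolding hook_eq rim_conjugate by auto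
  qed (use partition corner card_hook partition_diff in
       \<open>auto simp: is_partition_conjugate card_conjugate simp flip: conjugate_Diff\<close>)
qed

text \<open>\<open>a\<close> and \<open>b\<close> are the arm and the leg of the corner cell of the hook.\<close>
lemma rim_hook_arms_legs:
  assumes "is_rim_hook l mu R" "is_partition mu"
  obtains a b where "a + b + 1 = int l"
    "arms (mu - R) = (arms mu - {a}) \<union> (if 0 \<le> a - int l then {a - int l} else {})"
    "legs (mu - R) = (legs mu - {b}) \<union> (if 0 \<le> b - int l then {b - int l} else {})"
    "a - int l \<notin> arms mu" "b - int l \<notin> legs mu"
    "0 \<le> a \<Longrightarrow> a \<in> arms mu" "0 \<le> b \<Longrightarrow> b \<in> legs mu"
proof -
  obtain i0 j0 where hook: "rim_hook_at mu l i0 j0 R"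
    using assms unfolding is_rim_hook_def rim_hook_at_def by auto
  interpret H: rim_hook_at mu l i0 j0 R by (fact hook)
  interpret C: rim_hook_at "conjugate mu" l j0 i0 "conjugate R"
    by (rule rim_hook_at_conjugate[OF hook])
  have "frob_a mu i0 + frob_a (conjugate mu) j0 + 1 = int l"
    using H.hook_length unfolding frob_a_def rowlen_conjugate by simp
  moreover have "legs (mu - R) = arms (conjugate mu - conjugate R)"
    unfolding legs_def conjugate_Diff ..
  ultimately show thesis
    using that H.arms_diff_hook C.arms_diff_hook H.hook_end_notin_arms C.hook_end_notin_arms
      H.corner_arm_mem_arms C.corner_arm_mem_arms
    unfolding legs_def by presburger
qed

lemma rim_hook_arms_legs_cases [consumes 2]:
  assumes "is_rim_hook l mu R" "is_partition mu"
  obtains (arm) a where "int l \<le> a" "a \<in> arms mu" "a - int l \<notin> arms mu"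
      "arms (mu - R) = insert (a - int l) (arms mu - {a})" "legs (mu - R) = legs mu"
  | (leg) b where "int l \<le> b" "b \<in> legs mu" "b - int l \<notin> legs mu"
      "legs (mu - R) = insert (b - int l) (legs mu - {b})" "arms (mu - R) = arms mu"
  | (both) a b where "0 \<le> a" "0 \<le> b" "a + b + 1 = int l" "a \<in> arms mu" "b \<in> legs mu"
      "arms (mu - R) = arms mu - {a}" "legs (mu - R) = legs mu - {b}"
proof -
  obtain a b where ab: "a + b + 1 = int l"
    and arms: "arms (mu - R) = (arms mu - {a}) \<union> (if 0 \<le> a - int l then {a - int l} else {})"
    and legs: "legs (mu - R) = (legs mu - {b}) \<union> (if 0 \<le> b - int l then {b - int l} else {})"
    and fresh: "a - int l \<notin> arms mu" "b - int l \<notin> legs mu"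
    and mem: "0 \<le> a \<Longrightarrow> a \<in> arms mu" "0 \<le> b \<Longrightarrow> b \<in> legs mu"
    using rim_hook_arms_legs[OF assms] by blast
  consider (arm) "int l \<le> a" | (leg) "a < 0" | (both) "0 \<le> a" "a < int l" by linarith
  then show thesis
  proof cases
    case arm
    then have "b \<notin> legs mu" "b - int l < 0" using ab legs_nonneg by force+
    then have "legs (mu - R) = legs mu" unfolding legs by simp
    moreover have "arms (mu - R) = insert (a - int l) (arms mu - {a})" using arm unfolding arms by simp
    ultimately show thesis using that(1)[of a] arm fresh mem by simp
  next
    case leg
    then have "a \<notin> arms mu" "a - int l < 0" using ab arms_nonneg by force+
    then have "arms (mu - R) = arms mu" unfolding arms by simp
    moreover have "int l \<le> b" using ab leg by simp
    moreover then have "legs (mu - R) = insert (b - int l) (legs mu - {b})" unfolding legs by simp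
    ultimately show thesis using that(2)[of b] fresh mem by simp
  next
    case both
    then have "arms (mu - R) = arms mu - {a}" "legs (mu - R) = legs mu - {b}" "0 \<le> b"
      using ab unfolding arms legs by simp_all
    then show thesis using that(3)[of a b] both ab mem by simp
  qed
qed

section \<open>Eigenvalues as weights of boxes\<close>

definition Theta :: "nat \<Rightarrow> (nat \<Rightarrow> rat) \<Rightarrow> int \<Rightarrow> rat" where
  "Theta l p n = - p 0 * of_int ((n - 1) div int l) + eshift p (nat ((n - 1) mod int l))"

lemma Theta_diff:
  assumes "1 \<le> l"
  shows "Theta l p (n + 1) - Theta l p n = theta l p n"
proof -
  define L where "L = int l"
  define q where "q = n div L"
  define r where "r = n mod L"
  have L: "0 < L" using assms L_def by simp
  have n: "n = L * q + r" unfolding q_def r_def by simp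
  have r: "0 \<le> r" "r < L" unfolding r_def using L by auto
  have Theta_succ: "Theta l p (n + 1) = - p 0 * of_int q + eshift p (nat r)"
    unfolding Theta_def q_def r_def L_def by simp
  show ?thesis
  proof (cases "r = 0")
    case True
    then have "n - 1 = L * (q - 1) + (L - 1)" using n by (simp add: algebra_simps)
    then have div: "(n - 1) div L = q - 1" and mod: "(n - 1) mod L = L - 1"
      using L by (simp_all add: int_div_pos_eq int_mod_pos_eq)
    have "eshift p (nat (L - 1)) = (\<Sum>i\<in>{1..<l}. p i)"
      unfolding eshift_def L_def using assms by (intro sum.cong) auto
    moreover have "theta l p n = - p 0 + H0 l p"
      unfolding theta_def Let_def using True r_def L_def by simp
    moreover have "eshift p (nat r) = 0" using True by (simp add: eshift_def)
    ultimately show ?thesis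
      unfolding Theta_succ unfolding Theta_def L_def[symmetric] div mod H0_def
      by (simp add: algebra_simps)
  next
    case False
    then have "n - 1 = L * q + (r - 1)" using n by simp
    then have div: "(n - 1) div L = q" and mod: "(n - 1) mod L = r - 1"
      using r False by (simp_all add: int_div_pos_eq int_mod_pos_eq)
    have "nat r = Suc (nat (r - 1))" using False r by simp
    then have "eshift p (nat r) = eshift p (nat (r - 1)) + p (nat r)"
      unfolding eshift_def by (simp add: sum.cl_ivl_Suc)
    moreover have "theta l p n = p (nat r)"
      unfolding theta_def Let_def using False r r_def L_def by auto
    ultimately show ?thesis
      unfolding Theta_succ unfolding Theta_def L_def[symmetric] div mod by simp
  qed
qed

lemma sum_theta_descending:
  assumes "1 \<le> l"
  shows "(\<Sum>s = 1..int k. theta l p (r - s)) = Theta l p r - Theta l p (r - int k)"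
proof (induction k)
  case (Suc k)
  have "{1..int (Suc k)} = insert (int k + 1) {1..int k}" by auto
  then show ?case
    using Suc.IH Theta_diff[OF assms, of p "r - int k - 1"] by (simp add: algebra_simps)
qed simp

lemma sum_theta_ascending:
  assumes "1 \<le> l"
  shows "(\<Sum>s = 0..int k - 1. theta l p (u + s)) = Theta l p (u + int k) - Theta l p u"
proof (induction k)
  case (Suc k)
  have "{0..int (Suc k) - 1} = insert (int k) {0..int k - 1}" by auto
  then show ?case
    using Suc.IH Theta_diff[OF assms, of p "u + int k"] by (simp add: algebra_simps)
qed simp

lemma Theta_multiple:
  assumes "1 \<le> l"
  shows "Theta l p (z * int l + 1) = - p 0 * of_int z"
  unfolding Theta_def eshift_def using assms by simp

definition alpha_hook :: "nat \<Rightarrow> (nat \<Rightarrow> rat) \<Rightarrow> int \<Rightarrow> int \<Rightarrow> int \<Rightarrow> rat" where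
  "alpha_hook l p r m j =
     (if 1 \<le> j \<and> j < r then (\<Sum>s = 1..j. theta l p (r - s))
      else if r \<le> j \<and> j \<le> m - 1 then - (\<Sum>s = 0..m - j - 1. theta l p (- m + r + s))
      else 0)"

lemma alpha_eq_alpha_hook: "alpha l p mu i = alpha_hook l p (frob_r mu i) (frob_m mu i)"
  unfolding alpha_def alpha_hook_def Let_def by (rule ext) simp

lemma alpha_hook_leg:
  assumes "1 \<le> l" "1 \<le> j" "j < r"
  shows "alpha_hook l p r m j = Theta l p r - Theta l p (r - j)"
  using assms sum_theta_descending[OF assms(1), of p r "nat j"] unfolding alpha_hook_def by simp

lemma alpha_hook_arm:
  assumes "1 \<le> l" "1 \<le> r" "r \<le> j" "j \<le> m"
  shows "alpha_hook l p r m j = Theta l p (r - m) - Theta l p (r - j)"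
proof (cases "j = m")
  case False
  have "(\<Sum>s = 0..m - j - 1. theta l p (- m + r + s)) = Theta l p (r - j) - Theta l p (r - m)"
    using sum_theta_ascending[OF assms(1), of p "- m + r" "nat (m - j)"] assms by simp
  then show ?thesis unfolding alpha_hook_def using assms False by simp
qed (use assms in \<open>simp add: alpha_hook_def\<close>)

text \<open>A pair \<open>(k, c)\<close> stands for a box of content \<open>c\<close> in the \<open>k\<close>-th component of a
  multipartition; \<open>weight\<close> is its contribution \<open>e\<^sub>k + h c\<close> to \<open>t\<^sup>e Res(t\<^sup>h)\<close>.\<close>
definition weight :: "(nat \<Rightarrow> rat) \<Rightarrow> nat \<times> int \<Rightarrow> rat" where
  "weight p kc = eshift p (fst kc) + p 0 * of_int (snd kc)"

definition leg_range :: "nat \<Rightarrow> int \<Rightarrow> int set" where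
  "leg_range l b = {- (b div int l) .. (if b mod int l = 0 then -1 else 0)}"

definition arm_range :: "nat \<Rightarrow> int \<Rightarrow> int set" where
  "arm_range l a = {(if (- a - 1) mod int l = 0 then 0 else 1) .. - ((- a - 1) div int l) - 1}"

definition leg_points :: "nat \<Rightarrow> int \<Rightarrow> (nat \<times> int) set" where
  "leg_points l b = (\<lambda>c. (nat (b mod int l), c)) ` leg_range l b"

definition arm_points :: "nat \<Rightarrow> int \<Rightarrow> (nat \<times> int) set" where
  "arm_points l a = (\<lambda>c. (nat ((- a - 1) mod int l), c)) ` arm_range l a"

lemma mod_class_eq_image:
  fixes L r :: int
  shows "{j. P j \<and> j mod L = r mod L} = (\<lambda>c. r - c * L) ` {c. P (r - c * L)}"
proof (intro set_eqI iffI)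
  fix j assume j: "j \<in> {j. P j \<and> j mod L = r mod L}"
  then have "L dvd j - r" by (simp add: mod_eq_dvd_iff)
  then obtain c where "j - r = L * c" by (elim dvdE)
  then have "j = r - (- c) * L" by (simp add: algebra_simps)
  then show "j \<in> (\<lambda>c. r - c * L) ` {c. P (r - c * L)}"
    using j by (intro image_eqI[of _ _ "- c"]) auto
qed (auto simp: mod_diff_eq[symmetric])

lemma leg_range_iff:
  assumes "1 \<le> l"
  shows "c \<in> leg_range l b \<longleftrightarrow> 1 \<le> b mod int l - c * int l \<and> b mod int l - c * int l \<le> b"
proof -
  define L where "L = int l"
  have L: "0 < L" using assms L_def by simp
  have b: "b = b div L * L + b mod L" by simp
  have r: "0 \<le> b mod L" "b mod L < L" using L by auto
  have "b mod L - c * L \<le> b \<longleftrightarrow> (- c) * L \<le> b div L * L" by (smt (verit) b mult_minus_left)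
  also have "\<dots> \<longleftrightarrow> - c \<le> b div L" using L by (rule mult_le_cancel_right_pos)
  finally have 1: "b mod L - c * L \<le> b \<longleftrightarrow> - (b div L) \<le> c" by linarith
  consider (neg) "c \<le> -1" | (zero) "c = 0" | (pos) "1 \<le> c" by linarith
  then have 2: "1 \<le> b mod L - c * L \<longleftrightarrow> c \<le> (if b mod L = 0 then -1 else 0)"
  proof cases
    case neg
    then have "c * L \<le> - L" using mult_right_mono[OF neg, of L] L by simp
    then show ?thesis using neg r by auto
  next
    case pos
    then have "L \<le> c * L" using mult_right_mono[OF pos, of L] L by simp
    then have "\<not> 1 \<le> b mod L - c * L" using r by linarith
    then show ?thesis using pos by simp
  qed (use r in auto)
  show ?thesis using 1 2 unfolding leg_range_def L_def by auto
qed

lemma arm_range_iff: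
  fixes a c :: int
  assumes "1 \<le> l"
  defines "P \<equiv> - ((- a - 1) div int l)"
  shows "c \<in> arm_range l a \<longleftrightarrow> 1 \<le> (P - c) * int l \<and> (P - c) * int l \<le> a + 1"
proof -
  define L where "L = int l"
  define K where "K = (- a - 1) mod L"
  have L: "0 < L" using assms L_def by simp
  have aK: "a + 1 = P * L - K"
    unfolding P_def K_def L_def by (smt (verit) div_mult_mod_eq mult_minus_left)
  have K: "0 \<le> K" "K < L" unfolding K_def using L by auto
  have "L \<le> e * L" if "1 \<le> e" for e using mult_right_mono[OF that, of L] L by simp
  moreover have "e * L \<le> - L" if "e \<le> -1" for e using mult_right_mono[OF that, of L] L by simp
  ultimately have "1 \<le> (P - c) * L \<longleftrightarrow> c \<le> P - 1"
    and "(P - c) * L \<le> a + 1 \<longleftrightarrow> (if K = 0 then 0 else 1) \<le> c"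
    using L K unfolding aK by (smt (verit, best) mult_eq_0_iff left_diff_distrib)+
  then show ?thesis unfolding arm_range_def K_def P_def L_def by auto
qed

lemma leg_residues:
  assumes "1 \<le> l" "0 \<le> a"
  shows "{j \<in> {1..a + b + 1}. j mod int l = b mod int l} \<inter> {j. j < b + 1}
           = (\<lambda>c. b mod int l - c * int l) ` leg_range l b"
proof -
  have "{j \<in> {1..a + b + 1}. j mod int l = b mod int l} \<inter> {j. j < b + 1}
          = {j. (1 \<le> j \<and> j \<le> b) \<and> j mod int l = (b mod int l) mod int l}"
    using assms by auto
  also have "\<dots> = (\<lambda>c. b mod int l - c * int l) `
                    {c. 1 \<le> b mod int l - c * int l \<and> b mod int l - c * int l \<le> b}"
    by (rule mod_class_eq_image)
  also have "\<dots> = (\<lambda>c. b mod int l - c * int l) ` leg_range l b"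
    by (rule image_cong[OF _ refl]) (use leg_range_iff[OF assms(1)] in auto)
  finally show ?thesis .
qed

lemma arm_residues:
  fixes a b :: int
  assumes "1 \<le> l" "0 \<le> b"
  defines "P \<equiv> - ((- a - 1) div int l)"
  shows "{j \<in> {1..a + b + 1}. j mod int l = b mod int l} \<inter> {j. b + 1 \<le> j}
           = (\<lambda>c. b + (P - c) * int l) ` arm_range l a"
proof -
  have "{j \<in> {1..a + b + 1}. j mod int l = b mod int l} \<inter> {j. b + 1 \<le> j}
          = {j. (b + 1 \<le> j \<and> j \<le> a + b + 1) \<and> j mod int l = (b + P * int l) mod int l}"
    using assms(1,2) by auto
  also have "\<dots> = (\<lambda>c. b + P * int l - c * int l) `
                    {c. b + 1 \<le> b + P * int l - c * int l \<and> b + P * int l - c * int l \<le> a + b + 1}"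
    by (rule mod_class_eq_image)
  also have "\<dots> = (\<lambda>c. b + (P - c) * int l) ` arm_range l a"
  proof (rule image_cong)
    show "{c. b + 1 \<le> b + P * int l - c * int l \<and> b + P * int l - c * int l \<le> a + b + 1}
            = arm_range l a"
      using arm_range_iff[OF assms(1), where a = a, folded P_def] by (auto simp: left_diff_distrib)
  qed (simp add: algebra_simps)
  finally show ?thesis .
qed

lemma image_mset_mset_set_reindex:
  assumes "inj_on e C" "inj_on h C" "finite C" "\<And>c. c \<in> C \<Longrightarrow> f (e c) = g (h c)"
  shows "image_mset f (mset_set (e ` C)) = image_mset g (mset_set (h ` C))"
proof -
  have "image_mset f (mset_set (e ` C)) = image_mset (f \<circ> e) (mset_set C)"
    by (simp add: image_mset_mset_set[OF assms(1), symmetric] multiset.map_comp)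
  also have "\<dots> = image_mset (g \<circ> h) (mset_set C)"
    by (rule image_mset_cong) (use assms(3,4) in auto)
  also have "\<dots> = image_mset g (mset_set (h ` C))"
    by (simp add: image_mset_mset_set[OF assms(2), symmetric] multiset.map_comp)
  finally show ?thesis .
qed

lemma leg_eigenvalues:
  assumes "1 \<le> l" "0 \<le> a"
  shows "image_mset (alpha_hook l p (b + 1) (a + b + 1))
           (mset_set ({j \<in> {1..a + b + 1}. j mod int l = b mod int l} \<inter> {j. j < b + 1}))
         = image_mset (weight p) (mset_set (leg_points l b))"
  unfolding leg_residues[OF assms] leg_points_def
proof (rule image_mset_mset_set_reindex)
  show "inj_on (\<lambda>c. b mod int l - c * int l) (leg_range l b)"
    using assms(1) by (auto simp: inj_on_def)
  fix c assume "c \<in> leg_range l b"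
  then have j: "1 \<le> b mod int l - c * int l" "b mod int l - c * int l < b + 1"
    using leg_range_iff[OF assms(1)] by auto
  have "b + 1 - (b mod int l - c * int l) = (b div int l + c) * int l + 1"
    by (simp add: algebra_simps)
  then have T2: "Theta l p (b + 1 - (b mod int l - c * int l)) = - p 0 * of_int (b div int l + c)"
    using Theta_multiple[OF assms(1)] by presburger
  have T1: "Theta l p (b + 1) = - p 0 * of_int (b div int l) + eshift p (nat (b mod int l))"
    by (simp add: Theta_def)
  show "alpha_hook l p (b + 1) (a + b + 1) (b mod int l - c * int l) = weight p (nat (b mod int l), c)"
    unfolding alpha_hook_leg[OF assms(1) j] T1 T2 weight_def by (simp add: algebra_simps)
qed (auto simp: leg_range_def inj_on_def)

lemma arm_eigenvalues:
  assumes "1 \<le> l" "0 \<le> b"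
  shows "image_mset (alpha_hook l p (b + 1) (a + b + 1))
           (mset_set ({j \<in> {1..a + b + 1}. j mod int l = b mod int l} \<inter> {j. b + 1 \<le> j}))
         = image_mset (weight p) (mset_set (arm_points l a))"
  unfolding arm_residues[OF assms] arm_points_def
proof (rule image_mset_mset_set_reindex)
  define P where "P = - ((- a - 1) div int l)"
  show "inj_on (\<lambda>c. b + (P - c) * int l) (arm_range l a)"
    using assms(1) by (auto simp: inj_on_def)
  fix c assume "c \<in> arm_range l a"
  then have j: "b + 1 \<le> b + (P - c) * int l" "b + (P - c) * int l \<le> a + b + 1"
    using arm_range_iff[OF assms(1), where a = a] unfolding P_def by auto
  have "b + 1 - (b + (P - c) * int l) = (c - P) * int l + 1"
    by (simp add: algebra_simps)
  then have T2: "Theta l p (b + 1 - (b + (P - c) * int l)) = - p 0 * of_int (c - P)"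
    using Theta_multiple[OF assms(1)] by presburger
  have T1: "Theta l p (b + 1 - (a + b + 1)) = p 0 * of_int P + eshift p (nat ((- a - 1) mod int l))"
    unfolding P_def by (simp add: Theta_def)
  have r: "1 \<le> b + 1" using assms(2) by simp
  show "alpha_hook l p (b + 1) (a + b + 1) (b + (P - c) * int l)
      = weight p (nat ((- a - 1) mod int l), c)"
    unfolding alpha_hook_arm[OF assms(1) r j] T1 T2 weight_def by (simp add: algebra_simps)
qed (auto simp: arm_range_def inj_on_def)

lemma hook_eigenvalues:
  assumes "1 \<le> l" "0 \<le> a" "0 \<le> b"
  shows "image_mset (alpha_hook l p (b + 1) (a + b + 1))
           (mset_set {j \<in> {1..a + b + 1}. j mod int l = b mod int l})
         = image_mset (weight p) (mset_set (arm_points l a) + mset_set (leg_points l b))"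
proof -
  define J where "J = {j \<in> {1..a + b + 1}. j mod int l = b mod int l}"
  have "finite J" unfolding J_def by (rule finite_subset[of _ "{1..a + b + 1}"]) auto
  then have "mset_set J = mset_set (J \<inter> {j. j < b + 1}) + mset_set (J \<inter> {j. b + 1 \<le> j})"
    by (subst mset_set_Union[symmetric]) (auto intro: arg_cong[where f = mset_set])
  then show ?thesis
    using leg_eigenvalues[OF assms(1,2)] arm_eigenvalues[OF assms(1,3)] unfolding J_def by simp
qed

lemma image_mset_sum: "image_mset f (sum g A) = (\<Sum>x\<in>A. image_mset f (g x))"
  by (induction A rule: infinite_finite_induct) auto

definition points :: "nat \<Rightarrow> cell set \<Rightarrow> (nat \<times> int) multiset" where
  "points l mu = (\<Sum>a\<in>arms mu. mset_set (arm_points l a)) + (\<Sum>b\<in>legs mu. mset_set (leg_points l b))"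

lemma Eig_eq_weight_points:
  assumes "is_partition mu" "1 \<le> l"
  shows "Eig l p mu = image_mset (weight p) (points l mu)"
proof -
  define I where "I = {1..frob_rank mu}"
  have inj_a: "inj_on (frob_a mu) I"
    using inj_on_frob_a[OF assms(1)] unfolding I_def by (rule inj_on_subset) auto
  have inj_b: "inj_on (frob_b mu) I"
    using inj_on_frob_a[OF is_partition_conjugate[OF assms(1)]]
    unfolding I_def frob_b_eq_frob_a_conjugate by (rule inj_on_subset) auto
  have a_nonneg: "0 \<le> frob_a mu i" and b_nonneg: "0 \<le> frob_b mu i" if "i \<in> I" for i
    using that arms_nonneg legs_nonneg arms_eq_frob_a_image[OF assms(1)]
      legs_eq_frob_b_image[OF assms(1)] unfolding I_def by blast+
  have "Eig l p mu = (\<Sum>i\<in>I. image_mset (weight p)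
          (mset_set (arm_points l (frob_a mu i)) + mset_set (leg_points l (frob_b mu i))))"
    unfolding Eig_def I_def[symmetric] alpha_eq_alpha_hook frob_r_def frob_m_def
    using hook_eigenvalues[OF assms(2) a_nonneg b_nonneg] by (intro sum.cong) simp_all
  also have "\<dots> = image_mset (weight p) ((\<Sum>i\<in>I. mset_set (arm_points l (frob_a mu i)))
                     + (\<Sum>i\<in>I. mset_set (leg_points l (frob_b mu i))))"
    by (simp add: image_mset_sum sum.distrib)
  also have "\<dots> = image_mset (weight p) (points l mu)"
    unfolding points_def arms_eq_frob_a_image[OF assms(1)] legs_eq_frob_b_image[OF assms(1)]
      I_def[symmetric] by (simp add: sum.reindex[OF inj_a] sum.reindex[OF inj_b])
  finally show ?thesis .
qed

section \<open>A rim hook carries exactly one box\<close>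

lemma arm_points_shift:
  assumes "1 \<le> l" "int l \<le> a"
  shows "mset_set (arm_points l a) =
           mset_set (arm_points l (a - int l)) + {#(nat ((- a - 1) mod int l), - ((- a - 1) div int l) - 1)#}"
proof -
  define L where "L = int l"
  have L: "0 < L" using assms L_def by simp
  have shift: "- (a - L) - 1 = (- a - 1) + 1 * L" by simp
  have mod: "(- (a - L) - 1) mod L = (- a - 1) mod L"
    unfolding shift by (rule mod_mult_self1)
  have div: "(- (a - L) - 1) div L = (- a - 1) div L + 1"
    unfolding shift using L by simp
  have "(- a - 1) div L \<le> (- 1 - L) div L"
    using assms L_def by (intro zdiv_mono1) auto
  also have "(- 1 - L) div L = - 2"
    using L by (intro int_div_pos_eq[of _ _ _ "L - 1"]) auto
  finally have "(- a - 1) div L \<le> - 2" .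
  then have "arm_range l a = insert (- ((- a - 1) div L) - 1) (arm_range l (a - L))"
    "- ((- a - 1) div L) - 1 \<notin> arm_range l (a - L)"
    unfolding arm_range_def L_def[symmetric] mod div by auto
  then have "arm_points l a = insert (nat ((- a - 1) mod L), - ((- a - 1) div L) - 1) (arm_points l (a - L))"
    "(nat ((- a - 1) mod L), - ((- a - 1) div L) - 1) \<notin> arm_points l (a - L)"
    unfolding arm_points_def L_def[symmetric] mod by auto
  moreover have "finite (arm_points l (a - L))" unfolding arm_points_def arm_range_def by simp
  ultimately show ?thesis unfolding L_def by simp
qed

lemma leg_points_shift:
  assumes "1 \<le> l" "int l \<le> b"
  shows "mset_set (leg_points l b) =
           mset_set (leg_points l (b - int l)) + {#(nat (b mod int l), - (b div int l))#}"
proof -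
  define L where "L = int l"
  have L: "0 < L" using assms L_def by simp
  have mod: "(b - L) mod L = b mod L" by (simp add: mod_diff_right_eq[symmetric])
  have div: "(b - L) div L = b div L - 1"
    using L div_mult_mod_eq[of b L] by (intro int_div_pos_eq[of _ _ _ "b mod L"]) (simp_all add: algebra_simps)
  have "L div L \<le> b div L" using assms L_def by (intro zdiv_mono1) auto
  then have "1 \<le> b div L" using L by simp
  then have "leg_range l b = insert (- (b div L)) (leg_range l (b - L))"
    "- (b div L) \<notin> leg_range l (b - L)"
    unfolding leg_range_def L_def[symmetric] mod div by auto
  then have "leg_points l b = insert (nat (b mod L), - (b div L)) (leg_points l (b - L))"
    "(nat (b mod L), - (b div L)) \<notin> leg_points l (b - L)"
    unfolding leg_points_def L_def[symmetric] mod by auto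
  moreover have "finite (leg_points l (b - L))" unfolding leg_points_def leg_range_def by simp
  ultimately show ?thesis unfolding L_def by simp
qed

lemma arm_leg_points_complement:
  assumes "1 \<le> l" "0 \<le> a" "0 \<le> b" "a + b + 1 = int l"
  shows "mset_set (arm_points l a) + mset_set (leg_points l b) = {#(nat b, 0)#}"
proof -
  have b: "b mod int l = b" "b div int l = 0" using assms by auto
  have eq: "- a - 1 = int l * (- 1) + b" using assms(4) by simp
  have "b < int l" using assms by simp
  then have a: "(- a - 1) mod int l = b" "(- a - 1) div int l = - 1"
    using int_mod_pos_eq[OF eq] int_div_pos_eq[OF eq] assms(3) by auto
  show ?thesis
  proof (cases "b = 0")
    case True
    then have "arm_points l a = {(nat b, 0)}" "leg_points l b = {}"
      unfolding arm_points_def arm_range_def leg_points_def leg_range_def a b by auto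
    then show ?thesis by simp
  next
    case False
    then have "arm_points l a = {}" "leg_points l b = {(nat b, 0)}"
      unfolding arm_points_def arm_range_def leg_points_def leg_range_def a b by auto
    then show ?thesis by simp
  qed
qed

lemma points_diff_rim_hook:
  assumes "is_partition mu" "is_rim_hook l mu R" "1 \<le> l"
  obtains pt where "points l mu = points l (mu - R) + {#pt#}"
proof -
  have fin: "finite (arms mu)" "finite (legs mu)"
    using assms(1) by (simp_all add: finite_arms finite_legs)
  from assms(2,1) show thesis
  proof (cases rule: rim_hook_arms_legs_cases)
    case (arm a)
    then have "a - int l \<notin> arms mu - {a}" by simp
    then show thesis
      using that fin arm unfolding points_def
      by (simp add: sum.remove[OF fin(1) arm(2)] sum.insert_remove arm_points_shift[OF assms(3)]
          algebra_simps)
  next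
    case (leg b)
    then have "b - int l \<notin> legs mu - {b}" by simp
    then show thesis
      using that fin leg unfolding points_def
      by (simp add: sum.remove[OF fin(2) leg(2)] sum.insert_remove leg_points_shift[OF assms(3)]
          algebra_simps)
  next
    case (both a b)
    then show thesis
      using that arm_leg_points_complement[OF assms(3) both(1-3)] unfolding points_def
      by (simp add: sum.remove[OF fin(1) both(4)] sum.remove[OF fin(2) both(5)] algebra_simps)
  qed
qed

lemma card_filter_Diff_singleton:
  assumes "finite A" "x \<in> A"
  shows "card {a \<in> A - {x}. P a} + (if P x then 1 else 0) = card {a \<in> A. P a}"
proof (cases "P x")
  case True
  then have "{a \<in> A - {x}. P a} = {a \<in> A. P a} - {x}" "x \<in> {a \<in> A. P a}"
    using assms by auto
  then show ?thesis using card_Suc_Diff1[of "{a \<in> A. P a}" x] assms(1) True by simp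
next
  case False
  then have "{a \<in> A - {x}. P a} = {a \<in> A. P a}" by auto
  then show ?thesis using False by simp
qed

lemma card_filter_exchange:
  assumes "finite A" "x \<in> A" "y \<notin> A" "f y = f x"
  shows "card {a \<in> insert y (A - {x}). f a = k} = card {a \<in> A. f a = k}"
proof -
  have "{a \<in> insert y (A - {x}). f a = k} =
          (if f y = k then insert y {a \<in> A - {x}. f a = k} else {a \<in> A - {x}. f a = k})"
    by auto
  then have "card {a \<in> insert y (A - {x}). f a = k} =
               card {a \<in> A - {x}. f a = k} + (if f y = k then 1 else 0)"
    using assms(1,3) by simp
  then show ?thesis using card_filter_Diff_singleton[OF assms(1,2), of "\<lambda>a. f a = k"] assms(4) by simp
qed

text \<open>This is the only consequence of an empty \<open>l\<close>-core that the argument uses.\<close>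
definition balanced :: "nat \<Rightarrow> cell set \<Rightarrow> bool" where
  "balanced l mu \<longleftrightarrow>
     (\<forall>k. card {a \<in> arms mu. (- a - 1) mod int l = k} = card {b \<in> legs mu. b mod int l = k})"

lemma balanced_diff_rim_hook:
  assumes "is_partition mu" "is_rim_hook l mu R"
  shows "balanced l (mu - R) \<longleftrightarrow> balanced l mu"
proof -
  have fin: "finite (arms mu)" "finite (legs mu)"
    using assms(1) by (simp_all add: finite_arms finite_legs)
  from assms(2,1) show ?thesis
  proof (cases rule: rim_hook_arms_legs_cases)
    case (arm a)
    have "(- (a - int l) - 1) mod int l = ((- a - 1) + 1 * int l) mod int l"
      by (rule arg_cong[where f = "\<lambda>x. x mod int l"]) simp
    also have "\<dots> = (- a - 1) mod int l" by (rule mod_mult_self1)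
    finally have "(- (a - int l) - 1) mod int l = (- a - 1) mod int l" .
    then show ?thesis
      unfolding balanced_def arm(4,5)
      by (simp only: card_filter_exchange[OF fin(1) arm(2,3), where f = "\<lambda>a. (- a - 1) mod int l"])
  next
    case (leg b)
    have "(b - int l) mod int l = b mod int l"
      by (simp add: mod_diff_right_eq[symmetric])
    then show ?thesis
      unfolding balanced_def leg(4,5)
      by (simp only: card_filter_exchange[OF fin(2) leg(2,3), where f = "\<lambda>b. b mod int l"])
  next
    case (both a b)
    have "- a - 1 = b + (- 1) * int l" using both(3) by simp
    then have same_class: "(- a - 1) mod int l = b mod int l" by simp
    show ?thesis
      unfolding balanced_def both(6,7)
      using card_filter_Diff_singleton[OF fin(1) both(4), of "\<lambda>a. (- a - 1) mod int l = _"]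
        card_filter_Diff_singleton[OF fin(2) both(5), of "\<lambda>b. b mod int l = _"] same_class
      by (metis (no_types, lifting) add_right_cancel)
  qed
qed

lemma empty_core_balanced:
  assumes "empty_core l mu" "is_partition mu" "1 \<le> l"
  shows "balanced l mu"
  using assms
proof (induction rule: empty_core.induct)
  case empty
  have "arms {} = {}" "legs {} = {}"
    unfolding legs_def arms_def frob_a_def rowlen_def conjugate_def by auto
  then show ?case unfolding balanced_def by simp
next
  case (step mu R)
  then have "is_partition (mu - R)" unfolding is_rim_hook_def by auto
  then show ?case using step balanced_diff_rim_hook by blast
qed

section \<open>Partitions with prescribed diagonal lengths\<close>

definition content :: "cell \<Rightarrow> int" where
  "content x = int (snd x) - int (fst x)"

definition diagonal_cell :: "int \<Rightarrow> nat \<Rightarrow> cell" where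
  "diagonal_cell c t = (if 0 \<le> c then (t, t + nat c) else (t + nat (- c), t))"

text \<open>The diagram whose diagonal of content \<open>c\<close> has length \<open>d c\<close>.\<close>
definition diagonal_partition :: "(int \<Rightarrow> nat) \<Rightarrow> cell set" where
  "diagonal_partition d = {x. 1 \<le> fst x \<and> 1 \<le> snd x \<and> min (fst x) (snd x) \<le> d (content x)}"

definition diagonal_profile :: "(int \<Rightarrow> nat) \<Rightarrow> bool" where
  "diagonal_profile d \<longleftrightarrow>
     (\<forall>c\<ge>0. d (c + 1) \<le> d c \<and> d c \<le> d (c + 1) + 1) \<and>
     (\<forall>c\<le>0. d (c - 1) \<le> d c \<and> d c \<le> d (c - 1) + 1) \<and>
     (\<exists>N. \<forall>c. N \<le> \<bar>c\<bar> \<longrightarrow> d c = 0)"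

lemma content_diagonal_cell [simp]: "content (diagonal_cell c t) = c"
  unfolding content_def diagonal_cell_def by auto

lemma min_diagonal_cell [simp]: "min (fst (diagonal_cell c t)) (snd (diagonal_cell c t)) = t"
  unfolding diagonal_cell_def by auto

lemma diagonal_cell_ge1: "1 \<le> t \<Longrightarrow> 1 \<le> fst (diagonal_cell c t) \<and> 1 \<le> snd (diagonal_cell c t)"
  unfolding diagonal_cell_def by auto

lemma diagonal_cell_content_min [simp]: "diagonal_cell (content x) (min (fst x) (snd x)) = x"
  unfolding diagonal_cell_def content_def by (cases x) auto

lemma inj_diagonal_cell: "inj (diagonal_cell c)"
  by (rule injI) (metis min_diagonal_cell)

lemma card_content_diagonal_partition: "card {x \<in> diagonal_partition d. content x = c} = d c"
proof -
  have "{x \<in> diagonal_partition d. content x = c} = diagonal_cell c ` {1..d c}"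
  proof (intro set_eqI iffI)
    fix x assume "x \<in> {x \<in> diagonal_partition d. content x = c}"
    then have "min (fst x) (snd x) \<in> {1..d c}" "x = diagonal_cell c (min (fst x) (snd x))"
      unfolding diagonal_partition_def by auto
    then show "x \<in> diagonal_cell c ` {1..d c}" by blast
  next
    fix x assume "x \<in> diagonal_cell c ` {1..d c}"
    then obtain t where "t \<in> {1..d c}" "x = diagonal_cell c t" by auto
    then show "x \<in> {x \<in> diagonal_partition d. content x = c}"
      unfolding diagonal_partition_def using diagonal_cell_ge1[of t c] by auto
  qed
  then show ?thesis by (simp add: card_image inj_on_subset[OF inj_diagonal_cell])
qed

lemma diagonal_profile_le_0:
  assumes "diagonal_profile d"
  shows "d c \<le> d 0"
proof (cases "0 \<le> c")
  case True
  then show ?thesis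
  proof (induction rule: int_ge_induct)
    case (step i)
    then show ?case using assms unfolding diagonal_profile_def by (meson order_trans)
  qed simp
next
  case False
  then have "c \<le> 0" by simp
  then show ?thesis
  proof (induction rule: int_le_induct)
    case (step i)
    then show ?case using assms unfolding diagonal_profile_def by (meson order_trans)
  qed simp
qed

lemma finite_diagonal_partition:
  assumes "diagonal_profile d"
  shows "finite (diagonal_partition d)"
proof -
  obtain N where N: "\<And>c. N \<le> \<bar>c\<bar> \<Longrightarrow> d c = 0"
    using assms unfolding diagonal_profile_def by blast
  have "diagonal_partition d \<subseteq> case_prod diagonal_cell ` ({- N..N} \<times> {1..d 0})"
  proof
    fix x assume "x \<in> diagonal_partition d"
    then have x: "1 \<le> fst x" "1 \<le> snd x" "min (fst x) (snd x) \<le> d (content x)"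
      unfolding diagonal_partition_def by auto
    then have "\<bar>content x\<bar> < N" using N[of "content x"] by fastforce
    moreover have "min (fst x) (snd x) \<le> d 0" using x diagonal_profile_le_0[OF assms] le_trans by blast
    ultimately have "(content x, min (fst x) (snd x)) \<in> {- N..N} \<times> {1..d 0}" using x by auto
    then show "x \<in> case_prod diagonal_cell ` ({- N..N} \<times> {1..d 0})"
      by (metis case_prod_conv diagonal_cell_content_min image_eqI)
  qed
  then show ?thesis by (rule finite_subset) auto
qed

lemma diagonal_partition_step_up:
  assumes "diagonal_profile d" "(Suc i, j) \<in> diagonal_partition d" "1 \<le> i"
  shows "(i, j) \<in> diagonal_partition d"
proof -
  define c where "c = int j - int (Suc i)"
  have x: "1 \<le> j" "min (Suc i) j \<le> d c"
    using assms(2) unfolding diagonal_partition_def content_def c_def by auto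
  have "min i j \<le> d (c + 1)"
  proof (cases "0 \<le> c")
    case True
    then show ?thesis using x assms(1) unfolding diagonal_profile_def c_def by fastforce
  next
    case False
    have "\<forall>c\<le>0. d (c - 1) \<le> d c" using assms(1) unfolding diagonal_profile_def by blast
    then have "d (c + 1 - 1) \<le> d (c + 1)" by (rule allE[of _ "c + 1"]) (use False in simp)
    moreover have "j \<le> i" using False unfolding c_def by simp
    ultimately show ?thesis using x by simp
  qed
  then show ?thesis using x assms(3) unfolding diagonal_partition_def content_def c_def by auto
qed

lemma diagonal_partition_step_left:
  assumes "diagonal_profile d" "(i, Suc j) \<in> diagonal_partition d" "1 \<le> j"
  shows "(i, j) \<in> diagonal_partition d"
proof -
  define c where "c = int (Suc j) - int i"
  have x: "1 \<le> i" "min i (Suc j) \<le> d c"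
    using assms(2) unfolding diagonal_partition_def content_def c_def by auto
  have "min i j \<le> d (c - 1)"
  proof (cases "c \<le> 0")
    case True
    then show ?thesis using x assms(1) unfolding diagonal_profile_def c_def by fastforce
  next
    case False
    have "\<forall>c\<ge>0. d (c + 1) \<le> d c" using assms(1) unfolding diagonal_profile_def by blast
    then have "d (c - 1 + 1) \<le> d (c - 1)" by (rule allE[of _ "c - 1"]) (use False in simp)
    moreover have "i \<le> j" using False unfolding c_def by simp
    ultimately show ?thesis using x by simp
  qed
  then show ?thesis using x assms(3) unfolding diagonal_partition_def content_def c_def by auto
qed

lemma is_partition_diagonal_partition:
  assumes "diagonal_profile d"
  shows "is_partition (diagonal_partition d)"
proof -
  have up: "(i', j) \<in> diagonal_partition d"
    if "(i, j) \<in> diagonal_partition d" "1 \<le> i'" "i' \<le> i" for i i' j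
    using that(3,1)
  proof (induction rule: inc_induct)
    case (step n)
    then show ?case using diagonal_partition_step_up[OF assms] that(2) by simp
  qed
  have left: "(i, j') \<in> diagonal_partition d"
    if "(i, j) \<in> diagonal_partition d" "1 \<le> j'" "j' \<le> j" for i j j'
    using that(3,1)
  proof (induction rule: inc_induct)
    case (step n)
    then show ?case using diagonal_partition_step_left[OF assms] that(2) by simp
  qed
  have "\<forall>(i, j)\<in>diagonal_partition d. \<forall>i' j'. 1 \<le> i' \<and> i' \<le> i \<and> 1 \<le> j' \<and> j' \<le> j
          \<longrightarrow> (i', j') \<in> diagonal_partition d"
    using up left by blast
  moreover have "\<forall>(i, j)\<in>diagonal_partition d. 1 \<le> i \<and> 1 \<le> j"
    unfolding diagonal_partition_def by auto
  ultimately show ?thesis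
    unfolding is_partition_def using finite_diagonal_partition[OF assms] by blast
qed

lemma partition_diagonal_indices:
  assumes "is_partition lam"
  shows "{t. 1 \<le> t \<and> diagonal_cell c t \<in> lam} = {1..card {x \<in> lam. content x = c}}"
proof -
  define T where "T = {t. 1 \<le> t \<and> diagonal_cell c t \<in> lam}"
  have pos: "1 \<le> fst x \<and> 1 \<le> snd x" if "x \<in> lam" for x
    using assms that unfolding is_partition_def by auto
  have "{x \<in> lam. content x = c} = diagonal_cell c ` T"
  proof (intro set_eqI iffI)
    fix x assume x: "x \<in> {x \<in> lam. content x = c}"
    then have "min (fst x) (snd x) \<in> T" "x = diagonal_cell c (min (fst x) (snd x))"
      unfolding T_def using pos[of x] by auto
    then show "x \<in> diagonal_cell c ` T" by blast
  qed (auto simp: T_def)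
  then have card: "card {x \<in> lam. content x = c} = card T"
    by (simp add: card_image inj_on_subset[OF inj_diagonal_cell])
  have "T \<subseteq> (\<lambda>x. min (fst x) (snd x)) ` lam"
    unfolding T_def by (force simp: image_iff)
  then have "finite T" using assms unfolding is_partition_def by (blast intro: finite_surj)
  moreover have "t' \<in> T" if "t \<in> T" "1 \<le> t'" "t' \<le> t" for t t'
  proof -
    have "diagonal_cell c t \<in> lam" using that(1) unfolding T_def by simp
    then have "diagonal_cell c t' \<in> lam"
      using assms that(2,3) unfolding is_partition_def diagonal_cell_def
      by (cases "0 \<le> c") fastforce+
    then show ?thesis using that(2) unfolding T_def by simp
  qed
  ultimately have "T = {1..card T}"
    by (intro down_closed_nat_set_eq) (auto simp: T_def)
  then show ?thesis unfolding T_def card by simp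
qed

lemma partition_eq_diagonal_partition:
  assumes "is_partition lam"
  shows "lam = diagonal_partition (\<lambda>c. card {x \<in> lam. content x = c})"
proof (intro set_eqI)
  fix x :: cell
  have "x \<in> lam \<Longrightarrow> 1 \<le> fst x \<and> 1 \<le> snd x"
    using assms unfolding is_partition_def by (cases x) auto
  then have "x \<in> lam \<longleftrightarrow> 1 \<le> fst x \<and> 1 \<le> snd x \<and>
               min (fst x) (snd x) \<in> {t. 1 \<le> t \<and> diagonal_cell (content x) t \<in> lam}"
    by auto
  also have "\<dots> \<longleftrightarrow> x \<in> diagonal_partition (\<lambda>c. card {x \<in> lam. content x = c})"
    unfolding partition_diagonal_indices[OF assms] diagonal_partition_def by auto
  finally show "x \<in> lam \<longleftrightarrow> x \<in> diagonal_partition (\<lambda>c. card {x \<in> lam. content x = c})" .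
qed

section \<open>The multipartition of a balanced diagram\<close>

lemma count_sum_mset_set:
  assumes "finite A" "\<And>a. finite (F a)"
  shows "count (\<Sum>a\<in>A. mset_set (F a)) x = card {a \<in> A. x \<in> F a}"
proof -
  have "count (\<Sum>a\<in>A. mset_set (F a)) x = (\<Sum>a\<in>A. if x \<in> F a then 1 else 0)"
    using assms(2) by (simp add: count_sum count_mset_set')
  also have "\<dots> = card {a \<in> A. x \<in> F a}"
    using assms(1) by (simp add: sum.If_cases Int_def)
  finally show ?thesis .
qed

lemma count_points:
  assumes "is_partition mu"
  shows "count (points l mu) kc = card {a \<in> arms mu. kc \<in> arm_points l a} + card {b \<in> legs mu. kc \<in> leg_points l b}"
  unfolding points_def count_union
  using assms by (simp add: count_sum_mset_set finite_arms finite_legs arm_points_def arm_range_def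
      leg_points_def leg_range_def)

lemma mem_arm_points:
  "1 \<le> l \<Longrightarrow> (k, c) \<in> arm_points l a \<longleftrightarrow> int k = (- a - 1) mod int l \<and> c \<in> arm_range l a"
  unfolding arm_points_def by auto

lemma mem_leg_points:
  "1 \<le> l \<Longrightarrow> (k, c) \<in> leg_points l b \<longleftrightarrow> int k = b mod int l \<and> c \<in> leg_range l b"
  unfolding leg_points_def by auto

lemma count_points_ge_l:
  assumes "is_partition mu" "1 \<le> l" "l \<le> k"
  shows "count (points l mu) (k, c) = 0"
proof -
  have "int k \<noteq> x mod int l" for x
  proof -
    have "x mod int l < int l" using assms(2) by simp
    then show ?thesis using assms(3) by linarith
  qed
  then show ?thesis
    unfolding count_points[OF assms(1)] mem_arm_points[OF assms(2)] mem_leg_points[OF assms(2)]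
    by simp
qed

lemma arm_quotient_pos:
  assumes "1 \<le> l" "0 \<le> a"
  shows "1 \<le> - ((- a - 1) div int l)"
proof -
  have "(- a - 1) div int l < 0" using assms by (simp add: pos_imp_zdiv_neg_iff)
  then show ?thesis by linarith
qed

text \<open>For \<open>c \<ge> 0\<close> only arms, for \<open>c < 0\<close> only legs contribute to the content \<open>c\<close>;
  at \<open>c = 0\<close> either count is correct because the residue classes are balanced.\<close>
lemma count_points_arms:
  assumes "is_partition mu" "1 \<le> l" "balanced l mu" "0 \<le> c"
  shows "count (points l mu) (k, c) =
           card {a \<in> arms mu. (- a - 1) mod int l = int k \<and> c + 1 \<le> - ((- a - 1) div int l)}"
proof -
  have P1: "1 \<le> - ((- a - 1) div int l)" if "a \<in> arms mu" for a
    using arm_quotient_pos[OF assms(2) arms_nonneg[OF that]] .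
  have Q0: "0 \<le> b div int l" if "b \<in> legs mu" for b
    using assms(2) legs_nonneg[OF that] by (simp add: pos_imp_zdiv_nonneg_iff)
  show ?thesis
  proof (cases "c = 0 \<and> k \<noteq> 0")
    case True
    then have sets: "{a \<in> arms mu. (k, c) \<in> arm_points l a} = {}"
      "{b \<in> legs mu. (k, c) \<in> leg_points l b} = {b \<in> legs mu. b mod int l = int k}"
      "{a \<in> arms mu. (- a - 1) mod int l = int k \<and> c + 1 \<le> - ((- a - 1) div int l)}
         = {a \<in> arms mu. (- a - 1) mod int l = int k}"
      using Q0 P1 unfolding mem_arm_points[OF assms(2)] mem_leg_points[OF assms(2)]
        arm_range_def leg_range_def by auto
    show ?thesis
      using assms(3) unfolding count_points[OF assms(1)] sets balanced_def by simp
  next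
    case False
    then have sets: "{a \<in> arms mu. (k, c) \<in> arm_points l a}
          = {a \<in> arms mu. (- a - 1) mod int l = int k \<and> c + 1 \<le> - ((- a - 1) div int l)}"
      "{b \<in> legs mu. (k, c) \<in> leg_points l b} = {}"
      using assms(4) unfolding mem_arm_points[OF assms(2)] mem_leg_points[OF assms(2)]
        arm_range_def leg_range_def by auto
    show ?thesis unfolding count_points[OF assms(1)] sets by simp
  qed
qed

lemma count_points_legs:
  assumes "is_partition mu" "1 \<le> l" "balanced l mu" "c \<le> 0"
  shows "count (points l mu) (k, c) = card {b \<in> legs mu. b mod int l = int k \<and> - c \<le> b div int l}"
proof (cases "c = 0")
  case True
  have P1: "1 \<le> - ((- a - 1) div int l)" if "a \<in> arms mu" for a
    using arm_quotient_pos[OF assms(2) arms_nonneg[OF that]] .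
  have Q0: "0 \<le> b div int l" if "b \<in> legs mu" for b
    using assms(2) legs_nonneg[OF that] by (simp add: pos_imp_zdiv_nonneg_iff)
  have "{a \<in> arms mu. (- a - 1) mod int l = int k \<and> c + 1 \<le> - ((- a - 1) div int l)}
          = {a \<in> arms mu. (- a - 1) mod int l = int k}"
    using P1 True by auto
  moreover have "{b \<in> legs mu. b mod int l = int k \<and> - c \<le> b div int l}
          = {b \<in> legs mu. b mod int l = int k}"
    using Q0 True by auto
  ultimately show ?thesis
    using count_points_arms[OF assms(1-3), of c k] assms(3) True unfolding balanced_def by simp
next
  case False
  then have sets: "{a \<in> arms mu. (k, c) \<in> arm_points l a} = {}"
    "{b \<in> legs mu. (k, c) \<in> leg_points l b} = {b \<in> legs mu. b mod int l = int k \<and> - c \<le> b div int l}"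
    using assms(4) unfolding mem_arm_points[OF assms(2)] mem_leg_points[OF assms(2)]
      arm_range_def leg_range_def by auto
  show ?thesis unfolding count_points[OF assms(1)] sets by simp
qed

lemma card_threshold_step:
  fixes f :: "'a \<Rightarrow> int"
  assumes "finite S" "inj_on f S"
  shows "card {x \<in> S. v + 1 \<le> f x} \<le> card {x \<in> S. v \<le> f x}"
    and "card {x \<in> S. v \<le> f x} \<le> card {x \<in> S. v + 1 \<le> f x} + 1"
proof -
  show "card {x \<in> S. v + 1 \<le> f x} \<le> card {x \<in> S. v \<le> f x}"
    using assms(1) by (intro card_mono) auto
  have "card {x \<in> S. f x = v} \<le> 1"
    unfolding One_nat_def using assms by (subst card_le_Suc0_iff_eq) (auto simp: inj_on_def)
  moreover have "{x \<in> S. v \<le> f x} = {x \<in> S. v + 1 \<le> f x} \<union> {x \<in> S. f x = v}" by auto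
  ultimately show "card {x \<in> S. v \<le> f x} \<le> card {x \<in> S. v + 1 \<le> f x} + 1"
    by (metis (no_types, lifting) add_le_mono card_Un_le le_refl order_trans)
qed

lemma inj_on_div_same_mod:
  fixes f :: "'a \<Rightarrow> int"
  assumes "inj_on f S"
  shows "inj_on (\<lambda>x. f x div L) {x \<in> S. f x mod L = k}"
proof (rule inj_onI)
  fix x y assume x: "x \<in> {x \<in> S. f x mod L = k}" and y: "y \<in> {x \<in> S. f x mod L = k}"
    and div: "f x div L = f y div L"
  have "f x mod L = f y mod L" using x y by simp
  then have "f x = f y" by (metis div div_mult_mod_eq)
  then show "x = y" using assms x y by (auto dest: inj_onD)
qed

lemma diagonal_profile_thresholds:
  fixes P :: "'a \<Rightarrow> int" and Q :: "'b \<Rightarrow> int"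
  assumes "finite M" "finite N" "inj_on P M" "inj_on Q N"
    and arms: "\<And>c. 0 \<le> c \<Longrightarrow> d c = card {a \<in> M. c + 1 \<le> P a}"
    and legs: "\<And>c. c \<le> 0 \<Longrightarrow> d c = card {b \<in> N. - c \<le> Q b}"
  shows "diagonal_profile d"
proof -
  define B where "B = Max (P ` M \<union> Q ` N \<union> {0}) + 1"
  have P_less: "P a < B" if "a \<in> M" for a
    unfolding B_def using assms(1,2) that by (simp add: Max_ge_iff order.strict_trans1)
  have Q_less: "Q b < B" if "b \<in> N" for b
    unfolding B_def using assms(1,2) that by (simp add: Max_ge_iff order.strict_trans1)
  have "d c = 0" if "B \<le> \<bar>c\<bar>" for c
  proof (cases "0 \<le> c")
    case True
    have "\<not> c + 1 \<le> P a" if "a \<in> M" for a using P_less[OF that] \<open>B \<le> \<bar>c\<bar>\<close> True by simp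
    then have empty: "{a \<in> M. c + 1 \<le> P a} = {}" by auto
    show ?thesis unfolding arms[OF True] empty by simp
  next
    case False
    have "\<not> - c \<le> Q b" if "b \<in> N" for b using Q_less[OF that] \<open>B \<le> \<bar>c\<bar>\<close> False by simp
    then have empty: "{b \<in> N. - c \<le> Q b} = {}" by auto
    have "c \<le> 0" using False by simp
    show ?thesis unfolding legs[OF \<open>c \<le> 0\<close>] empty by simp
  qed
  moreover have "d (c + 1) \<le> d c" "d c \<le> d (c + 1) + 1" if "0 \<le> c" for c
    using that arms[of c] arms[of "c + 1"] card_threshold_step[OF assms(1,3), of "c + 1"]
    by simp_all
  moreover have "d (c - 1) \<le> d c" "d c \<le> d (c - 1) + 1" if "c \<le> 0" for c
    using that legs[of c] legs[of "c - 1"] card_threshold_step[OF assms(2,4), of "- c"]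
    by (simp_all add: algebra_simps)
  ultimately show ?thesis unfolding diagonal_profile_def by blast
qed

lemma diagonal_profile_count_points:
  assumes "is_partition mu" "1 \<le> l" "balanced l mu"
  shows "diagonal_profile (\<lambda>c. count (points l mu) (k, c))"
proof (rule diagonal_profile_thresholds)
  define M where "M = {a \<in> arms mu. (- a - 1) mod int l = int k}"
  define N where "N = {b \<in> legs mu. b mod int l = int k}"
  show "finite M" "finite N"
    unfolding M_def N_def using finite_arms[OF assms(1)] finite_legs[OF assms(1)] by auto
  have "inj_on (\<lambda>a. (- a - 1) div int l) M"
    unfolding M_def by (rule inj_on_div_same_mod) (auto simp: inj_on_def)
  then show "inj_on (\<lambda>a. - ((- a - 1) div int l)) M" unfolding inj_on_def by simp
  show "inj_on (\<lambda>b. b div int l) N"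
    unfolding N_def using inj_on_div_same_mod[of id "legs mu"] by simp
  show "count (points l mu) (k, c) = card {a \<in> M. c + 1 \<le> - ((- a - 1) div int l)}" if "0 \<le> c" for c
    using count_points_arms[OF assms that] unfolding M_def by (simp add: conj_assoc)
  show "count (points l mu) (k, c) = card {b \<in> N. - c \<le> b div int l}" if "c \<le> 0" for c
    using count_points_legs[OF assms that] unfolding N_def by (simp add: conj_assoc)
qed

definition multipartition_points :: "nat \<Rightarrow> (nat \<Rightarrow> cell set) \<Rightarrow> (nat \<times> int) multiset" where
  "multipartition_points l Lam = (\<Sum>k<l. image_mset (\<lambda>x. (k, content x)) (mset_set (Lam k)))"

lemma count_image_mset_mset_set:
  assumes "finite S"
  shows "count (image_mset f (mset_set S)) y = card {x \<in> S. f x = y}"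
  using assms by (simp add: count_image_mset Int_def card_eq_sum[symmetric] conj_commute vimage_def)

lemma count_multipartition_points:
  assumes "\<And>k. finite (Lam k)"
  shows "count (multipartition_points l Lam) (k, c) = (if k < l then card {x \<in> Lam k. content x = c} else 0)"
proof -
  have "count (multipartition_points l Lam) (k, c) = (\<Sum>k'<l. card {x \<in> Lam k'. (k', content x) = (k, c)})"
    unfolding multipartition_points_def count_sum by (simp add: count_image_mset_mset_set[OF assms])
  also have "\<dots> = (\<Sum>k'<l. if k' = k then card {x \<in> Lam k. content x = c} else 0)"
    by (intro sum.cong) auto
  finally show ?thesis by simp
qed

lemma res_sum_eq_image_weight:
  "(\<Sum>k<l. res (eshift p k) (p 0) (Lam k)) = image_mset (weight p) (multipartition_points l Lam)"
  unfolding multipartition_points_def image_mset_sum res_def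
  by (intro sum.cong refl)
     (auto simp: multiset.map_comp comp_def weight_def content_def intro!: image_mset_cong)

lemma finite_multipartition_component: "is_multipartition l Lam \<Longrightarrow> finite (Lam k)"
  unfolding is_multipartition_def is_partition_def by (cases "k < l") auto

lemma multipartition_eqI:
  assumes "is_multipartition l Lam1" "is_multipartition l Lam2"
    and "multipartition_points l Lam1 = multipartition_points l Lam2"
  shows "Lam1 = Lam2"
proof
  fix k
  show "Lam1 k = Lam2 k"
  proof (cases "k < l")
    case True
    have "card {x \<in> Lam1 k. content x = c} = card {x \<in> Lam2 k. content x = c}" for c
      using arg_cong[OF assms(3), of "\<lambda>M. count M (k, c)"] True
      by (simp add: count_multipartition_points finite_multipartition_component[OF assms(1)]
          finite_multipartition_component[OF assms(2)])
    moreover have "is_partition (Lam1 k)" "is_partition (Lam2 k)"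
      using assms(1,2) True unfolding is_multipartition_def by auto
    ultimately show ?thesis
      using partition_eq_diagonal_partition[of "Lam1 k"] partition_eq_diagonal_partition[of "Lam2 k"]
      by simp
  qed (use assms(1,2) in \<open>simp add: is_multipartition_def\<close>)
qed

definition multipartition_of :: "nat \<Rightarrow> cell set \<Rightarrow> nat \<Rightarrow> cell set" where
  "multipartition_of l mu k =
     (if k < l then diagonal_partition (\<lambda>c. count (points l mu) (k, c)) else {})"

lemma multipartition_of:
  assumes "is_partition mu" "1 \<le> l" "balanced l mu"
  shows "is_multipartition l (multipartition_of l mu)"
    and "multipartition_points l (multipartition_of l mu) = points l mu"
proof -
  note profile = diagonal_profile_count_points[OF assms]
  show "is_multipartition l (multipartition_of l mu)"
    unfolding is_multipartition_def multipartition_of_def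
    using is_partition_diagonal_partition[OF profile] by auto
  have "finite (multipartition_of l mu k)" for k
    unfolding multipartition_of_def using finite_diagonal_partition[OF profile] by auto
  then show "multipartition_points l (multipartition_of l mu) = points l mu"
    by (intro multiset_eqI)
       (auto simp: count_multipartition_points multipartition_of_def card_content_diagonal_partition
         count_points_ge_l[OF assms(1,2)])
qed

section \<open>Generic parameters\<close>

lemma abs_content_less_card:
  assumes "is_partition lam" "(i, j) \<in> lam"
  shows "\<bar>content (i, j)\<bar> < int (card lam)"
proof -
  have ij: "1 \<le> i" "1 \<le> j" and fin: "finite lam"
    using assms unfolding is_partition_def by auto
  have "(\<lambda>j'. (i, j')) ` {1..j} \<subseteq> lam" "(\<lambda>i'. (i', j)) ` {1..i} \<subseteq> lam"
    using assms unfolding is_partition_def by fastforce+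
  then have "card ((\<lambda>j'. (i, j')) ` {1..j}) \<le> card lam" "card ((\<lambda>i'. (i', j)) ` {1..i}) \<le> card lam"
    using fin by (simp_all add: card_mono)
  then have "j \<le> card lam" "i \<le> card lam" by (simp_all add: card_image inj_on_def)
  then show ?thesis using ij unfolding content_def by simp
qed

definition point_box :: "nat \<Rightarrow> int \<Rightarrow> (nat \<times> int) set" where
  "point_box l n = {x. fst x < l \<and> \<bar>snd x\<bar> \<le> n}"

lemma finite_point_box: "finite (point_box l n)"
proof -
  have "point_box l n \<subseteq> {..<l} \<times> {- n..n}" unfolding point_box_def by auto
  then show ?thesis by (rule finite_subset) auto
qed

lemma multipartition_points_in_box:
  assumes "is_multipartition l Lam" "int (size (multipartition_points l Lam)) \<le> n"
  shows "set_mset (multipartition_points l Lam) \<subseteq> point_box l n"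
proof
  fix y assume "y \<in># multipartition_points l Lam"
  then obtain k x where kx: "k < l" "x \<in> Lam k" "y = (k, content x)"
    unfolding multipartition_points_def
    using finite_multipartition_component[OF assms(1)] by (auto simp: set_mset_sum)
  have "is_partition (Lam k)" using assms(1) kx(1) unfolding is_multipartition_def by auto
  then have "\<bar>content x\<bar> < int (card (Lam k))" using abs_content_less_card kx(2) by (cases x) auto
  moreover have "card (Lam k) \<le> (\<Sum>k<l. card (Lam k))"
    using kx(1) by (intro member_le_sum) auto
  then have "card (Lam k) \<le> size (multipartition_points l Lam)"
    unfolding multipartition_points_def by simp
  ultimately show "y \<in> point_box l n" unfolding point_box_def using kx assms(2) by auto
qed

definition weight_diff_coeffs :: "nat \<times> int \<Rightarrow> nat \<times> int \<Rightarrow> nat \<Rightarrow> rat" where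
  "weight_diff_coeffs x y i = (if i = 0 then of_int (snd x - snd y) else 0)
     + (if 1 \<le> i \<and> i \<le> fst x then 1 else 0) - (if 1 \<le> i \<and> i \<le> fst y then 1 else 0)"

lemma eshift_eq_sum_lessThan:
  assumes "k < l"
  shows "eshift p k = (\<Sum>i<l. (if 1 \<le> i \<and> i \<le> k then 1 else 0) * p i)"
proof -
  have "(\<Sum>i<l. (if 1 \<le> i \<and> i \<le> k then 1 else 0) * p i) = (\<Sum>i<l. if 1 \<le> i \<and> i \<le> k then p i else 0)"
    by (rule sum.cong) auto
  also have "\<dots> = sum p {i \<in> {..<l}. 1 \<le> i \<and> i \<le> k}"
    by (rule sum.inter_filter[symmetric]) simp
  also have "{i \<in> {..<l}. 1 \<le> i \<and> i \<le> k} = {1..k}" using assms by auto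
  finally show ?thesis unfolding eshift_def ..
qed

lemma sum_weight_diff_coeffs:
  assumes "fst x < l" "fst y < l"
  shows "(\<Sum>i<l. weight_diff_coeffs x y i * p i) = weight p x - weight p y"
proof -
  have "(\<Sum>i<l. (if i = 0 then of_int (snd x - snd y) else 0) * p i)
          = (\<Sum>i<l. if i = 0 then of_int (snd x - snd y) * p i else 0)"
    by (rule sum.cong) auto
  also have "\<dots> = of_int (snd x - snd y) * p 0"
    using assms by (simp add: sum.delta)
  finally have "(\<Sum>i<l. (if i = 0 then of_int (snd x - snd y) else 0) * p i) = of_int (snd x - snd y) * p 0" .
  then show ?thesis
    unfolding weight_diff_coeffs_def weight_def eshift_eq_sum_lessThan[OF assms(1)]
      eshift_eq_sum_lessThan[OF assms(2)]
    by (simp add: algebra_simps sum.distrib sum_subtractf)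
qed

lemma weight_diff_coeffs_nonzero:
  assumes "x \<noteq> y" "fst x < l" "fst y < l"
  shows "\<exists>i<l. weight_diff_coeffs x y i \<noteq> 0"
proof (cases "snd x = snd y")
  case False
  then show ?thesis using assms by (intro exI[of _ 0]) (auto simp: weight_diff_coeffs_def)
next
  case True
  then have "fst x \<noteq> fst y" using assms(1) by (cases x, cases y) auto
  then show ?thesis
    using assms(2,3) by (intro exI[of _ "max (fst x) (fst y)"]) (auto simp: weight_diff_coeffs_def)
qed

text \<open>The finitely many hyperplanes off which \<open>weight p\<close> separates the points of the box.\<close>
definition degenerate_params :: "nat \<Rightarrow> int \<Rightarrow> ((nat \<Rightarrow> rat) \<times> rat) set" where
  "degenerate_params l n = (\<lambda>(x, y). (weight_diff_coeffs x y, 0)) `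
     {(x, y). x \<in> point_box l n \<and> y \<in> point_box l n \<and> x \<noteq> y}"

lemma finite_degenerate_params: "finite (degenerate_params l n)"
proof -
  have "{(x, y). x \<in> point_box l n \<and> y \<in> point_box l n \<and> x \<noteq> y} \<subseteq> point_box l n \<times> point_box l n"
    by auto
  then have "finite {(x, y). x \<in> point_box l n \<and> y \<in> point_box l n \<and> x \<noteq> y}"
    by (rule finite_subset) (simp add: finite_point_box)
  then show ?thesis unfolding degenerate_params_def by simp
qed

lemma degenerate_params_nonzero: "\<forall>(c, d)\<in>degenerate_params l n. \<exists>k<l. c k \<noteq> 0"
  unfolding degenerate_params_def point_box_def using weight_diff_coeffs_nonzero by auto

lemma inj_on_weight:
  assumes "\<forall>(c, d)\<in>degenerate_params l n. (\<Sum>k<l. c k * p k) \<noteq> d"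
  shows "inj_on (weight p) (point_box l n)"
proof (rule inj_onI, rule ccontr)
  fix x y assume xy: "x \<in> point_box l n" "y \<in> point_box l n" "weight p x = weight p y" "x \<noteq> y"
  then have "(weight_diff_coeffs x y, 0) \<in> degenerate_params l n"
    unfolding degenerate_params_def by force
  then have "(\<Sum>k<l. weight_diff_coeffs x y k * p k) \<noteq> 0" using assms by auto
  then show False using xy sum_weight_diff_coeffs[of x l y p] unfolding point_box_def by simp
qed

lemma EigMP_eq_multipartition_of:
  assumes "is_partition mu" "1 \<le> l" "balanced l mu"
    and "\<forall>(c, d)\<in>degenerate_params l n. (\<Sum>k<l. c k * p k) \<noteq> d"
    and "int (size (points l mu)) \<le> n"
  shows "EigMP l p mu = multipartition_of l mu"
  unfolding EigMP_def
proof (rule the_equality)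
  note Lam = multipartition_of[OF assms(1-3)]
  show "is_multipartition l (multipartition_of l mu) \<and>
      (\<Sum>k<l. res (eshift p k) (p 0) (multipartition_of l mu k)) = Eig l p mu"
    using Lam unfolding res_sum_eq_image_weight Eig_eq_weight_points[OF assms(1,2)] by simp
  fix Lam' assume Lam': "is_multipartition l Lam' \<and> (\<Sum>k<l. res (eshift p k) (p 0) (Lam' k)) = Eig l p mu"
  then have eq: "image_mset (weight p) (multipartition_points l Lam') =
                   image_mset (weight p) (multipartition_points l (multipartition_of l mu)) + {#}"
    unfolding res_sum_eq_image_weight Eig_eq_weight_points[OF assms(1,2)] Lam(2) by simp
  then have "size (multipartition_points l Lam') = size (points l mu)"
    using Lam(2) by (metis add_0_right size_image_mset)
  then have "set_mset (multipartition_points l Lam') \<union> set_mset (multipartition_points l (multipartition_of l mu))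
               \<subseteq> point_box l n"
    using multipartition_points_in_box Lam Lam' assms(5) by (metis le_sup_iff)
  then have "multipartition_points l Lam' = multipartition_points l (multipartition_of l mu)"
    using image_mset_eq_image_mset_plusD[OF eq] inj_on_subset[OF inj_on_weight[OF assms(4)]] by force
  then show "Lam' = multipartition_of l mu" using multipartition_eqI Lam'  Lam(1) by blast
qed

lemma diagonal_partition_remove:
  assumes "\<And>c. d c = d' c + (if c = c0 then 1 else 0)"
  shows "diagonal_cell c0 (d c0) \<in> diagonal_partition d"
    and "diagonal_partition d' = diagonal_partition d - {diagonal_cell c0 (d c0)}"
proof -
  have "1 \<le> d c0" using assms[of c0] by simp
  then show "diagonal_cell c0 (d c0) \<in> diagonal_partition d"
    unfolding diagonal_partition_def using diagonal_cell_ge1 by simp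
  show "diagonal_partition d' = diagonal_partition d - {diagonal_cell c0 (d c0)}"
  proof (intro set_eqI)
    fix y :: cell
    have "y = diagonal_cell c0 (d c0) \<longleftrightarrow> content y = c0 \<and> min (fst y) (snd y) = d c0"
      by (metis content_diagonal_cell diagonal_cell_content_min min_diagonal_cell)
    then show "y \<in> diagonal_partition d' \<longleftrightarrow> y \<in> diagonal_partition d - {diagonal_cell c0 (d c0)}"
      unfolding diagonal_partition_def using assms[of "content y"] by auto
  qed
qed

lemma multipartition_of_remove:
  assumes "is_partition mu" "1 \<le> l" "points l mu = points l mu' + {#pt#}"
  shows "\<exists>k<l. \<exists>x\<in>multipartition_of l mu k.
           multipartition_of l mu' = (multipartition_of l mu)(k := multipartition_of l mu k - {x})"
proof -
  obtain k0 c0 where pt: "pt = (k0, c0)" by (cases pt)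
  have count: "count (points l mu) (k, c) = count (points l mu') (k, c) + (if (k, c) = (k0, c0) then 1 else 0)"
    for k c using assms(3) pt by simp
  have "k0 < l"
    using count[of k0 c0] count_points_ge_l[OF assms(1,2), of k0 c0] by (cases "k0 < l") auto
  define x where "x = diagonal_cell c0 (count (points l mu) (k0, c0))"
  note remove = diagonal_partition_remove[of "\<lambda>c. count (points l mu) (k0, c)"
      "\<lambda>c. count (points l mu') (k0, c)" c0]
  have "multipartition_of l mu' k = ((multipartition_of l mu)(k0 := multipartition_of l mu k0 - {x})) k"
    for k
    using remove count \<open>k0 < l\<close> unfolding multipartition_of_def x_def by (cases "k = k0") auto
  moreover have "x \<in> multipartition_of l mu k0"
    using remove count \<open>k0 < l\<close> unfolding multipartition_of_def x_def by simp
  ultimately show ?thesis using \<open>k0 < l\<close> by blast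
qed

theorem proposition7p5:
  fixes l n :: nat and mu R :: "cell set"
  assumes "1 \<le> l"
    and "is_partition mu" and "empty_core l mu" and "card mu = n * l"
    and "is_rim_hook l mu R"
  shows "\<exists>Z :: ((nat \<Rightarrow> rat) \<times> rat) set. finite Z \<and> (\<forall>(c,d)\<in>Z. \<exists>k<l. c k \<noteq> 0) \<and>
     (\<forall>p :: nat \<Rightarrow> rat. (\<forall>(c,d)\<in>Z. (\<Sum>k<l. c k * p k) \<noteq> d) \<longrightarrow>
        (\<exists>k<l. \<exists>x\<in>EigMP l p mu k.
            EigMP l p (mu - R) = (EigMP l p mu)(k := EigMP l p mu k - {x})))"
proof -
  have partition': "is_partition (mu - R)" using assms(5) unfolding is_rim_hook_def by blast
  have balanced: "balanced l mu" using empty_core_balanced assms(1-3) by blast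
  then have balanced': "balanced l (mu - R)" using balanced_diff_rim_hook assms(1,2,5) by blast
  obtain pt where pt: "points l mu = points l (mu - R) + {#pt#}"
    using points_diff_rim_hook assms(1,2,5) by blast
  define N where "N = int (size (points l mu))"
  show ?thesis
  proof (intro exI[of _ "degenerate_params l N"] conjI allI impI)
    fix p :: "nat \<Rightarrow> rat" assume generic: "\<forall>(c, d)\<in>degenerate_params l N. (\<Sum>k<l. c k * p k) \<noteq> d"
    have "EigMP l p mu = multipartition_of l mu"
      using EigMP_eq_multipartition_of[OF assms(2,1) balanced generic] N_def by simp
    moreover have "EigMP l p (mu - R) = multipartition_of l (mu - R)"
      using EigMP_eq_multipartition_of[OF partition' assms(1) balanced' generic] N_def pt by simp
    ultimately show "\<exists>k<l. \<exists>x\<in>EigMP l p mu k. EigMP l p (mu - R) = (EigMP l p mu)(k := EigMP l p mu k - {x})"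
      using multipartition_of_remove[OF assms(2,1) pt] by simp
  qed (simp_all add: finite_degenerate_params degenerate_params_nonzero)
qed

end
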